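(* Let $X\subset\mathbb{R}^m$ be a compact algebraic set and $f=(f_1,\dots,f_m):\mathbb{R}^n\to\mathbb{R}^m$ a polynomial map. Let $K\subset\mathbb{R}^n$ be a compact set with non-empty interior in $\mathbb{R}^n$ such that $f(K)\subset X$. Then $f(K)$ is a singleton contained in $X$. *)

theory Defs
  imports "HOL-Analysis.Analysis"
begin

inductive real_poly_fun :: "(real^'n \<Rightarrow> real) \<Rightarrow> bool" where
  const: "real_poly_fun (\<lambda>x. c)"
| coord: "real_poly_fun (\<lambda>x. x $ i)"
| add: "real_poly_fun p \<Longrightarrow> real_poly_fun q \<Longrightarrow> real_poly_fun (\<lambda>x. p x + q x)"
| mult: "real_poly_fun p \<Longrightarrow> real_poly_fun q \<Longrightarrow> real_poly_fun (\<lambda>x. p x * q x)"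

definition polynomial_map :: "(real^'n \<Rightarrow> real^'m) \<Rightarrow> bool" where
  "polynomial_map f \<longleftrightarrow> (\<forall>i. real_poly_fun (\<lambda>x. f x $ i))"

definition algebraic_set :: "(real^'m) set \<Rightarrow> bool" where
  "algebraic_set X \<longleftrightarrow> (\<exists>P. finite P \<and> (\<forall>p\<in>P. real_poly_fun p) \<and>
      X = {y. \<forall>p\<in>P. p y = 0})"

end

theory Submission
  imports Defs "HOL-Computational_Algebra.Fundamental_Theorem_Algebra"
begin

text \<open>
  Restricted to a line, a polynomial function on \<open>\<real>\<^sup>n\<close> is a univariate polynomial.
  An algebraic set \<open>X\<close> is cut out by polynomials, so if \<open>f\<close> maps an open set into \<open>X\<close>,
  the polynomials \<open>p \<circ> f\<close> vanish on an open set and hence everywhere: \<open>f\<close> maps all of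
  \<open>\<real>\<^sup>n\<close> into \<open>X\<close>. As \<open>X\<close> is compact, \<open>f\<close> is then a bounded polynomial map, and a
  univariate polynomial that is bounded is constant, so \<open>f\<close> is constant along every line.
\<close>

lemma real_poly_fun_along_line:
  assumes "real_poly_fun p"
  shows "\<exists>q. \<forall>t. p (a + t *\<^sub>R v) = poly q t"
  using assms
proof (induction rule: real_poly_fun.induct)
  case (const c)
  show ?case by (rule exI[of _ "[:c:]"]) simp
next
  case (coord i)
  show ?case by (rule exI[of _ "[:a $ i, v $ i:]"]) (simp add: algebra_simps)
next
  case (add p q)
  then obtain q1 q2 where "\<forall>t. p (a + t *\<^sub>R v) = poly q1 t" "\<forall>t. q (a + t *\<^sub>R v) = poly q2 t"
    by blast
  then show ?case by (intro exI[of _ "q1 + q2"]) simp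
next
  case (mult p q)
  then obtain q1 q2 where "\<forall>t. p (a + t *\<^sub>R v) = poly q1 t" "\<forall>t. q (a + t *\<^sub>R v) = poly q2 t"
    by blast
  then show ?case by (intro exI[of _ "q1 * q2"]) simp
qed

lemma real_poly_fun_comp_polynomial_map:
  assumes "real_poly_fun p" and "polynomial_map f"
  shows "real_poly_fun (\<lambda>x. p (f x))"
  using assms(1)
proof (induction rule: real_poly_fun.induct)
  case (const c)
  show ?case by (rule real_poly_fun.const)
next
  case (coord i)
  show ?case using assms(2) by (simp add: polynomial_map_def)
next
  case (add p q)
  show ?case using add.IH by (rule real_poly_fun.add)
next
  case (mult p q)
  show ?case using mult.IH by (rule real_poly_fun.mult)
qed

lemma poly_eq_0_if_vanishes_on_interval:
  fixes q :: "'a::linordered_field poly"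
  assumes "a < b" and "\<And>t. a < t \<Longrightarrow> t < b \<Longrightarrow> poly q t = 0"
  shows "q = 0"
proof (rule ccontr)
  assume "q \<noteq> 0"
  then have "finite {t. poly q t = 0}" by (rule poly_roots_finite)
  moreover have "{a<..<b} \<subseteq> {t. poly q t = 0}" using assms(2) by auto
  ultimately show False using infinite_Ioo[OF assms(1)] finite_subset by blast
qed

lemma bounded_poly_imp_constant:
  fixes q :: "'a::real_normed_field poly"
  assumes "bounded (range (poly q))"
  shows "poly q z = poly q 0"
proof (cases q)
  case (pCons c p)
  show ?thesis
  proof (cases "p = 0")
    case True
    then show ?thesis using pCons by simp
  next
    case False
    obtain B where B: "\<And>w. norm (poly q w) \<le> B"
      using assms unfolding bounded_iff by blast
    obtain r where "\<forall>w. r \<le> norm w \<longrightarrow> B + 1 \<le> norm (poly q w)"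
      using poly_infinity[OF False, of "B + 1" c] pCons by blast
    then have "B + 1 \<le> norm (poly q (of_real \<bar>r\<bar>))" by simp
    with B[of "of_real \<bar>r\<bar>"] show ?thesis by simp
  qed
qed

lemma real_poly_fun_vanishing_on_ball:
  assumes "real_poly_fun p" and "0 < r" and "\<And>y. y \<in> ball a r \<Longrightarrow> p y = 0"
  shows "p x = 0"
proof -
  define v where "v = x - a"
  define e where "e = r / (norm v + 1)"
  have "0 < e" using assms(2) by (simp add: e_def add_nonneg_pos)
  obtain q where q: "\<And>t. p (a + t *\<^sub>R v) = poly q t"
    using real_poly_fun_along_line[OF assms(1)] by blast
  have "a + t *\<^sub>R v \<in> ball a r" if "\<bar>t\<bar> < e" for t
  proof -
    have "norm (t *\<^sub>R v) \<le> e * norm v"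
      using that by (simp add: mult_right_mono)
    also have "\<dots> < r"
      using assms(2) by (simp add: e_def pos_divide_less_eq add_nonneg_pos)
    finally show ?thesis by (simp add: dist_norm)
  qed
  then have "q = 0"
    using poly_eq_0_if_vanishes_on_interval[of "-e" e q] \<open>0 < e\<close> q assms(3) by force
  then show ?thesis using q[of 1] by (simp add: v_def)
qed

lemma real_poly_fun_bounded_imp_constant:
  assumes "real_poly_fun p" and "bounded (range p)"
  shows "p x = p y"
proof -
  obtain q where q: "\<And>t. p (y + t *\<^sub>R (x - y)) = poly q t"
    using real_poly_fun_along_line[OF assms(1)] by blast
  have "range (poly q) \<subseteq> range p" using q by (metis image_subsetI rangeI)
  then have "poly q 1 = poly q 0"
    using assms(2) bounded_subset bounded_poly_imp_constant by blast
  then show ?thesis using q[of 1] q[of 0] by simp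
qed

lemma polynomial_map_range_subset_algebraic_set:
  assumes "algebraic_set X" and "polynomial_map f"
    and "open S" and "S \<noteq> {}" and "f ` S \<subseteq> X"
  shows "range f \<subseteq> X"
proof -
  obtain P where P: "\<forall>p\<in>P. real_poly_fun p" "X = {y. \<forall>p\<in>P. p y = 0}"
    using assms(1) unfolding algebraic_set_def by blast
  obtain a r where "0 < r" "ball a r \<subseteq> S"
    using assms(3,4) open_contains_ball by blast
  have "p (f x) = 0" if "p \<in> P" for p x
  proof (rule real_poly_fun_vanishing_on_ball[of "\<lambda>x. p (f x)", OF _ \<open>0 < r\<close>])
    show "real_poly_fun (\<lambda>x. p (f x))"
      using P(1) that assms(2) real_poly_fun_comp_polynomial_map by blast
    show "p (f y) = 0" if "y \<in> ball a r" for y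
      using that \<open>ball a r \<subseteq> S\<close> assms(5) P(2) \<open>p \<in> P\<close> by blast
  qed
  then show ?thesis using P(2) by blast
qed

lemma polynomial_map_bounded_imp_constant:
  assumes "polynomial_map f" and "bounded (range f)"
  shows "f x = f y"
proof -
  have "f x $ i = f y $ i" for i
  proof (rule real_poly_fun_bounded_imp_constant[of "\<lambda>x. f x $ i"])
    show "real_poly_fun (\<lambda>x. f x $ i)"
      using assms(1) unfolding polynomial_map_def by blast
    show "bounded (range (\<lambda>x. f x $ i))"
      using bounded_component_cart[OF assms(2), of i] by (simp add: image_image)
  qed
  then show ?thesis by (simp add: vec_eq_iff)
qed

theorem lemma2p1:
  fixes X :: "(real^'m) set" and f :: "real^'n \<Rightarrow> real^'m" and K :: "(real^'n) set"
  assumes "compact X" and "algebraic_set X"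
    and "polynomial_map f"
    and "compact K" and "interior K \<noteq> {}"
    and "f ` K \<subseteq> X"
  shows "\<exists>y. f ` K = {y} \<and> y \<in> X"
proof -
  have "f ` interior K \<subseteq> X" using assms(6) interior_subset by blast
  then have "range f \<subseteq> X"
    using polynomial_map_range_subset_algebraic_set assms(2,3,5) by blast
  then have "bounded (range f)"
    using compact_imp_bounded[OF assms(1)] bounded_subset by blast
  then have f_constant: "f x = f a" for x a
    using polynomial_map_bounded_imp_constant assms(3) by blast
  obtain a where "a \<in> K" using assms(5) interior_subset by blast
  then have "f ` K = {f a}" using f_constant by auto
  with \<open>a \<in> K\<close> assms(6) show ?thesis by blast
qed

end
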